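(* Fix $L>0$. Let $\mathcal{P}_+=\bigsqcup_{N\ge1}\mathcal{P}_{+,N}$, where $\mathcal{P}_{+,N}$ is the set of $x=(x_1,\dots,x_{2N})\in(\mathbb{R}_{>0})^{2N}$ with $\sum_{i=1}^{2N}x_i\le L$ satisfying the highest weight condition. Let $\mathcal{R}$ be the set of all data $\big(s;(\mu^{(i)},\nu^{(i)})_{1\le i\le s};(J^{(i)})_{1\le i\le s}\big)$ where $s\ge1$ is an integer, $\mu^{(i)}>0$ are reals, $\nu^{(i)}\ge1$ are integers such that, with $N^{(i)}=\sum_{j=i}^{s}\nu^{(j)}$, one has $\sum_{i=1}^s N^{(i)}\mu^{(i)}\le L/2$, and each $J^{(i)}=(J^{(i)}_1,\dots,J^{(i)}_{\nu^{(i)}})$ is a real tuple with $0\le J^{(i)}_1\le\cdots\le J^{(i)}_{\nu^{(i)}}\le q_i$, where $\lambda^{(i)}=\sum_{l=1}^i\mu^{(l)}$ and $q_i=L-2\sum_{k=1}^{s}\min(\lambda^{(i)},\lambda^{(k)})\nu^{(k)}$. Define $\phi:\mathcal{P}_+\to\mathcal{R}$ by running Algorithm II on $x$ and setting $s=u$, taking the pairs $(\mu^{(i)},\nu^{(i)})$ it produces, and taking $J^{(i)}$ to be the tuple $$\underbrace{r^{(i)}_1,\dots,r^{(i)}_1}_{\lceil n^{(i)}_1/2\rceil},\ \underbrace{r^{(i)}_2,\dots,r^{(i)}_2}_{\lceil n^{(i)}_2/2\rceil},\ \dots,\ \underbrace{r^{(i)}_{k^{(i)}},\dots,r^{(i)}_{k^{(i)}}}_{\lceil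 n^{(i)}_{k^{(i)}}/2\rceil}.$$ Then $\phi$ is well defined (takes values in $\mathcal{R}$) and is a bijection $\mathcal{P}_+\to\mathcal{R}$.
   Context: Highest weight condition: a sequence $x_1,\dots,x_{2n}$ of nonnegative reals satisfies it if $\sum_{i=1}^k(x_{2i-1}-x_{2i})\ge0$ for all $1\le k\le n$. Algorithm II. Set $N^{(1)}=N$, $x^{(1)}=x$. Given $x^{(i)}=(x^{(i)}_1,\dots,x^{(i)}_{2N^{(i)}})$ of positive reals satisfying the highest weight condition: let $\mu^{(i)}=\min_j x^{(i)}_j$ and $y^{(i)}_j=x^{(i)}_j-\mu^{(i)}$. In the (linear, non-cyclic) array $y^{(i)}_1,\dots,y^{(i)}_{2N^{(i)}}$ consider the maximal runs of consecutive zeros (a lone zero counts as a run); say there are $k^{(i)}$ runs, numbered $1,\dots,k^{(i)}$ from left to right, with lengths $n^{(i)}_1,\dots,n^{(i)}_{k^{(i)}}$. Let $I^{(i)}_j$ be the position of the first entry of the $j$th run and $r^{(i)}_j=\sum_{l=1}^{I^{(i)}_j-1}y^{(i)}_l$. Let $N^{(i+1)}=N^{(i)}-\sum_{j}\lceil n^{(i)}_j/2\rceil$ and $\nu^{(i)}=N^{(i)}-N^{(i+1)}$. If $N^{(i+1)}=0$, stop and set $u=i$. Otherwise form $x^{(i+1)}$ from $y^{(i)}$: (a) if a run of zeros is at the left end, delete it; (b) for every run of zeros lying between positive entries $a,b$, delete the zeros if the run length is even, and if odd delete the zeros and also replace $a,b$ by the single entry $a+b$; (c') if a run of zeros is at the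 right end, preceded by a positive entry $a$, delete the zeros, and if its length is odd also delete $a$. Repeat with $x^{(i+1)}$. *)

theory Defs
  imports Main "HOL.Real"
begin

(* Sequences are real lists; positions are 0-indexed internally. *)

definition highest_weight :: "real list \<Rightarrow> bool" where
  "highest_weight x \<longleftrightarrow>
     (\<forall>k. 1 \<le> k \<and> k \<le> length x div 2 \<longrightarrow> (\<Sum>i<k. x ! (2*i) - x ! (2*i+1)) \<ge> 0)"

definition Pplus :: "real \<Rightarrow> real list set" where
  "Pplus L = {x. (\<exists>N\<ge>1. length x = 2*N) \<and> (\<forall>a\<in>set x. a > 0)
                 \<and> sum_list x \<le> L \<and> highest_weight x}"

definition zero_starts :: "real list \<Rightarrow> nat list" where
  "zero_starts y = sorted_list_of_set
      {p. p < length y \<and> y ! p = 0 \<and> (p = 0 \<or> y ! (p - 1) \<noteq> 0)}"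

definition run_len :: "real list \<Rightarrow> nat \<Rightarrow> nat" where
  "run_len y p = length (takeWhile (\<lambda>b. b = 0) (drop p y))"

(* decomposition y = p1 0^z1 p2 0^z2 ... pm 0^zm (no leading zeros) *)
function decomp :: "real list \<Rightarrow> (real \<times> nat) list" where
  "decomp [] = []"
| "decomp (p # ys) = (p, length (takeWhile (\<lambda>b. b = 0) ys)) # decomp (dropWhile (\<lambda>b. b = 0) ys)"
  by pat_completeness auto
termination
  by (relation "measure length") (auto simp: le_imp_less_Suc length_dropWhile_le)

(* rules (b) and (c'): entries separated by an odd interior run of zeros are merged
   (merging is transitive along chains of odd runs); zeros are deleted; if the run at
   the right end is odd, the (merged) entry preceding it is deleted *)
fun grp :: "real \<Rightarrow> (real \<times> nat) list \<Rightarrow> real list" where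
  "grp acc [] = []"
| "grp acc [(p, z)] = (if odd z then [] else [acc + p])"
| "grp acc ((p, z) # q # rest) =
     (if odd z then grp (acc + p) (q # rest) else (acc + p) # grp 0 (q # rest))"

definition alg_step :: "real list \<Rightarrow> real \<times> nat \<times> real list \<times> real list" where
  "alg_step x =
    (let mu = Min (set x);
         y = map (\<lambda>a. a - mu) x;
         S = zero_starts y;
         J = concat (map (\<lambda>p. replicate ((run_len y p + 1) div 2) (sum_list (take p y))) S);
         nu = (\<Sum>p\<leftarrow>S. (run_len y p + 1) div 2);
         x' = grp 0 (decomp (dropWhile (\<lambda>b. b = 0) y))
     in (mu, nu, J, x'))"

(* Algorithm II with current N; first argument is fuel (the number of steps is at most N) *)
fun alg :: "nat \<Rightarrow> nat \<Rightarrow> real list \<Rightarrow> (real \<times> nat \<times> real list) list" where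
  "alg 0 N x = []"
| "alg (Suc k) N x =
     (case alg_step x of (mu, nu, J, x') \<Rightarrow>
        (mu, nu, J) # (if N - nu = 0 then [] else alg k (N - nu) x'))"

definition phi :: "real list \<Rightarrow> (real \<times> nat \<times> real list) list" where
  "phi x = alg (length x div 2) (length x div 2) x"

(* the set R; data indexed 0..s-1 *)
definition Rset :: "real \<Rightarrow> (real \<times> nat \<times> real list) list set" where
  "Rset L = {D. let s = length D;
                    mu = (\<lambda>i. fst (D ! i));
                    nu = (\<lambda>i. fst (snd (D ! i)));
                    J = (\<lambda>i. snd (snd (D ! i)));
                    NN = (\<lambda>i. \<Sum>j\<in>{i..<s}. nu j);
                    lam = (\<lambda>i. \<Sum>l\<le>i. mu l);
                    q = (\<lambda>i. L - 2 * (\<Sum>k<s. min (lam i) (lam k) * real (nu k)))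
                in s \<ge> 1
                   \<and> (\<forall>i<s. mu i > 0 \<and> nu i \<ge> 1)
                   \<and> (\<Sum>i<s. real (NN i) * mu i) \<le> L / 2
                   \<and> (\<forall>i<s. length (J i) = nu i \<and> sorted (J i)
                          \<and> (\<forall>j<nu i. 0 \<le> J i ! j \<and> J i ! j \<le> q i))}"

end

theory Submission
  imports Defs
begin

text \<open>
  Write \<open>0 # (x - \<mu>)\<close> as \<open>p\<^sub>1 0^z\<^sub>1 \<dots> p\<^sub>m 0^z\<^sub>m\<close> with \<open>p\<^sub>1 = 0\<close> and all other
  \<open>p\<^sub>i > 0\<close>. One step of Algorithm II keeps from this only the merged entries \<open>x'\<close> and the
  riggings \<open>J\<close>: the \<open>i\<close>-th run contributes \<open>\<lceil>z\<^sub>i/2\<rceil>\<close> copies of \<open>p\<^sub>1 + \<dots> + p\<^sub>i\<close>. This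
  loses nothing: reading \<open>J\<close> against the partial sums of \<open>x'\<close>, a rigging equal to the
  previous one adds two zeros to the current run, a rigging strictly inside an entry of \<open>x'\<close>
  splits that entry by an odd run, and otherwise the next entry of \<open>x'\<close> starts a new, even run.
  The highest weight condition forces the leading run to be even, passes from \<open>x\<close> to \<open>x'\<close> and
  back, and the sum drops by exactly \<open>2N\<mu>\<close>. So one step is a bijection between \<open>x\<close> of sum at
  most \<open>L\<close> and triples \<open>(\<mu>, J, x')\<close> with \<open>J \<subseteq> [0, L - 2N\<mu>]\<close> and \<open>x'\<close> of sum at most
  \<open>L - 2N\<mu>\<close>. Unfolding the constraints defining \<open>R\<close> one datum at a time gives exactly this
  recursion, and induction on \<open>N\<close> finishes the proof.
\<close>

section \<open>Run decompositions\<close>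

fun undecomp :: "(real \<times> nat) list \<Rightarrow> real list" where
  "undecomp [] = []"
| "undecomp ((p,z) # E) = p # replicate z 0 @ undecomp E"

lemma takeWhile_eq_replicate_zero: "takeWhile (\<lambda>b. b = (0::real)) ys = replicate (length (takeWhile (\<lambda>b. b = 0) ys)) 0"
  by (metis (mono_tags, lifting) replicate_length_same set_takeWhileD)

lemma undecomp_decomp: "undecomp (decomp l) = l"
proof (induction l rule: decomp.induct)
  case 1 then show ?case by simp
next
  case (2 p ys)
  then show ?case
    by (simp, metis takeWhile_dropWhile_id takeWhile_eq_replicate_zero)
qed

lemma decomp_fst_nonzero: "(l = [] \<or> hd l \<noteq> 0) \<Longrightarrow> \<forall>e\<in>set (decomp l). fst e \<noteq> 0"
proof (induction l rule: decomp.induct)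
  case 1 then show ?case by simp
next
  case (2 p ys)
  have "dropWhile (\<lambda>b. b = 0) ys = [] \<or> hd (dropWhile (\<lambda>b. b = 0) ys) \<noteq> 0"
    by (metis (mono_tags, lifting) hd_dropWhile)
  with 2 show ?case by auto
qed

lemma decomp_fst_in_set: "\<forall>e\<in>set (decomp l). fst e \<in> set l"
proof (induction l rule: decomp.induct)
  case 1 then show ?case by simp
next
  case (2 p ys)
  then show ?case by (auto dest: set_dropWhileD)
qed

lemma decomp_replicate: "(U = [] \<or> hd U \<noteq> 0) \<Longrightarrow>
   decomp (p # replicate z 0 @ U) = (p, z) # decomp U"
proof -
  assume h: "U = [] \<or> hd U \<noteq> 0"
  have t: "takeWhile (\<lambda>b. b = 0) (replicate z 0 @ U) = replicate z (0::real)"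
    using h by (cases U) (auto simp: takeWhile_append)
  have d: "dropWhile (\<lambda>b. b = 0) (replicate z 0 @ U) = U"
    using h by (cases U) (auto simp: dropWhile_append)
  show ?thesis using t d by simp
qed

lemma undecomp_hd: "E \<noteq> [] \<Longrightarrow> undecomp E \<noteq> [] \<and> hd (undecomp E) = fst (hd E)"
  by (cases E) auto

lemma decomp_undecomp: "(\<forall>e\<in>set E. fst e \<noteq> 0) \<Longrightarrow> decomp (undecomp E) = E"
proof (induction E)
  case Nil then show ?case by simp
next
  case (Cons e E)
  obtain p z where e: "e = (p,z)" by force
  have "undecomp E = [] \<or> hd (undecomp E) \<noteq> 0"
    using Cons.prems undecomp_hd by (cases E) auto
  then show ?case using Cons e by (simp add: decomp_replicate del: decomp.simps)
qed

lemma decomp_undecomp_Cons: "(\<forall>e\<in>set E. fst e \<noteq> 0) \<Longrightarrow> decomp (undecomp ((p,z)#E)) = (p,z) # E"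
proof -
  assume h: "\<forall>e\<in>set E. fst e \<noteq> 0"
  have "undecomp E = [] \<or> hd (undecomp E) \<noteq> 0"
    using h undecomp_hd by (cases E) auto
  then show ?thesis using h by (simp add: decomp_replicate decomp_undecomp del: decomp.simps)
qed

lemma sum_undecomp: "sum_list (undecomp D) = sum_list (map fst D)"
  by (induction D rule: undecomp.induct) (auto simp: sum_list_replicate)

lemma decomp_Cons_zero:
  assumes "\<forall>v\<in>set y. v \<ge> (0::real)"
  obtains z D where "decomp (0 # y) = (0, z) # D" "y = replicate z 0 @ undecomp D"
    "\<forall>e\<in>set D. fst e > 0"
proof -
  define z where "z = length (takeWhile (\<lambda>b. b = 0) y)"
  define rest where "rest = dropWhile (\<lambda>b. b = (0::real)) y"
  have "decomp (0 # y) = (0, z) # decomp rest" unfolding z_def rest_def by simp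
  moreover have "y = replicate z 0 @ undecomp (decomp rest)"
    unfolding z_def rest_def undecomp_decomp
    by (metis takeWhile_dropWhile_id takeWhile_eq_replicate_zero)
  moreover have "\<forall>e\<in>set (decomp rest). fst e > 0"
  proof -
    have "\<forall>v\<in>set rest. v \<ge> 0" using assms rest_def by (auto dest: set_dropWhileD)
    moreover have "rest = [] \<or> hd rest \<noteq> 0"
      unfolding rest_def by (metis (mono_tags, lifting) hd_dropWhile)
    ultimately show ?thesis using decomp_fst_nonzero decomp_fst_in_set by (metis less_eq_real_def)
  qed
  ultimately show ?thesis using that by blast
qed

section \<open>Riggings\<close>

fun riggings :: "real \<Rightarrow> (real \<times> nat) list \<Rightarrow> real list" where
  "riggings s [] = []"
| "riggings s ((p,z) # E) = replicate ((z+1) div 2) (s+p) @ riggings (s+p) E"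

lemma riggings_shift: "riggings s E = map (\<lambda>v. s + v) (riggings 0 E)"
proof (induction E arbitrary: s)
  case Nil then show ?case by simp
next
  case (Cons e E)
  obtain p z where e: "e = (p,z)" by force
  show ?case using Cons.IH[of "s+p"] Cons.IH[of p] e by (simp add: add.assoc)
qed

lemma riggings_bounds: "\<forall>e\<in>set E. fst e \<ge> 0 \<Longrightarrow> \<forall>v\<in>set (riggings s E). s \<le> v \<and> v \<le> s + sum_list (map fst E)"
proof (induction E arbitrary: s)
  case Nil then show ?case by simp
next
  case (Cons e E)
  obtain p z where e: "e = (p,z)" by force
  have "sum_list (map fst E) \<ge> 0" using Cons.prems by (intro sum_list_nonneg) auto
  then show ?case using Cons e by (force split: if_splits)
qed

lemma riggings_sorted: "\<forall>e\<in>set E. fst e \<ge> 0 \<Longrightarrow> sorted (riggings s E)"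
proof (induction E arbitrary: s)
  case Nil then show ?case by simp
next
  case (Cons e E)
  obtain p z where e: "e = (p,z)" by force
  then show ?case using Cons riggings_bounds[of E "s+p"] by (auto simp: sorted_append)
qed

lemma riggings_Nil_if: "0 \<notin> set (undecomp D) \<Longrightarrow> riggings s D = []"
  by (induction D arbitrary: s rule: undecomp.induct) (auto split: if_splits)

lemma riggings_not_Nil: "\<forall>e\<in>set D. fst e \<noteq> 0 \<Longrightarrow> 0 \<in> set (undecomp D) \<Longrightarrow> riggings s D \<noteq> []"
proof (induction D arbitrary: s rule: undecomp.induct)
  case 1 then show ?case by simp
next
  case (2 p z E)
  show ?case
  proof (cases z)
    case 0 then show ?thesis using 2 by auto
  next
    case (Suc n) then show ?thesis by simp
  qed
qed

text \<open>Left-to-right scans: the flag \<open>b\<close> records whether the previous entry was \<open>0\<close>, and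
  \<open>s\<close> is the partial sum of the entries already read.\<close>

fun zero_starts_from :: "nat \<Rightarrow> bool \<Rightarrow> real list \<Rightarrow> nat list" where
  "zero_starts_from i b [] = []"
| "zero_starts_from i b (a # r) = (if a = 0 \<and> \<not> b then [i] else []) @ zero_starts_from (Suc i) (a = 0) r"

lemma zero_starts_from_ge: "\<forall>e\<in>set (zero_starts_from i b y). i \<le> e"
  by (induction y arbitrary: i b) (auto, fastforce+)

lemma zero_starts_from_sorted: "sorted_wrt (<) (zero_starts_from i b y)"
proof (induction y arbitrary: i b)
  case Nil then show ?case by simp
next
  case (Cons a r)
  then show ?case using zero_starts_from_ge[of "Suc i" "a = 0" r] by (fastforce simp: sorted_wrt_append Suc_le_eq)
qed

lemma set_zero_starts_from: "set (zero_starts_from i b y) = (\<lambda>q. q + i) ` {q. q < length y \<and> y!q = 0 \<and> (q = 0 \<longrightarrow> \<not> b) \<and> (q > 0 \<longrightarrow> y!(q-1) \<noteq> 0)}"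
proof (induction y arbitrary: i b)
  case Nil then show ?case by simp
next
  case (Cons a r)
  show ?case
  proof (rule set_eqI, rule iffI)
    fix e assume "e \<in> set (zero_starts_from i b (a # r))"
    then consider "a = 0 \<and> \<not> b \<and> e = i" | "e \<in> set (zero_starts_from (Suc i) (a = 0) r)" by (auto split: if_splits)
    then show "e \<in> (\<lambda>q. q + i) ` {q. q < length (a # r) \<and> (a # r) ! q = 0 \<and> (q = 0 \<longrightarrow> \<not> b) \<and> (0 < q \<longrightarrow> (a # r) ! (q - 1) \<noteq> 0)}"
    proof cases
      case 1 then show ?thesis by (auto intro!: image_eqI[where x=0])
    next
      case 2
      then obtain q where q: "e = q + Suc i" "q < length r" "r!q = 0" "q = 0 \<longrightarrow> \<not> (a = 0)" "q > 0 \<longrightarrow> r!(q-1) \<noteq> 0"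
        using Cons.IH by auto
      show ?thesis
        apply (rule image_eqI[where x="Suc q"])
        using q by (auto simp: nth_Cons split: nat.splits)
    qed
  next
    fix e assume "e \<in> (\<lambda>q. q + i) ` {q. q < length (a # r) \<and> (a # r) ! q = 0 \<and> (q = 0 \<longrightarrow> \<not> b) \<and> (0 < q \<longrightarrow> (a # r) ! (q - 1) \<noteq> 0)}"
    then obtain q where q: "e = q + i" "q < length (a#r)" "(a#r)!q = 0" "q = 0 \<longrightarrow> \<not> b" "q > 0 \<longrightarrow> (a#r)!(q-1) \<noteq> 0"
      by auto
    show "e \<in> set (zero_starts_from i b (a # r))"
    proof (cases q)
      case 0 then show ?thesis using q by auto
    next
      case (Suc q')
      have "e \<in> set (zero_starts_from (Suc i) (a = 0) r)"
        unfolding Cons.IH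
        apply (rule image_eqI[where x=q'])
        using q Suc by (auto simp: nth_Cons split: nat.splits)
      then show ?thesis by simp
    qed
  qed
qed

lemma zero_starts_eq: "zero_starts y = zero_starts_from 0 False y"
proof -
  have fin: "finite {p. p < length y \<and> y ! p = 0 \<and> (p = 0 \<or> y ! (p - 1) \<noteq> 0)}" by simp
  have st: "set (zero_starts_from 0 False y) = {p. p < length y \<and> y ! p = 0 \<and> (p = 0 \<or> y ! (p - 1) \<noteq> 0)}"
    unfolding set_zero_starts_from by auto
  have "sorted_list_of_set {p. p < length y \<and> y ! p = 0 \<and> (p = 0 \<or> y ! (p - 1) \<noteq> 0)} = zero_starts_from 0 False y"
    using sorted_list_of_set_unique[OF fin, of "zero_starts_from 0 False y"] zero_starts_from_sorted[of 0 False y] st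
    by (metis distinct_card strict_sorted_iff)
  then show ?thesis unfolding zero_starts_def .
qed

fun riggings_scan :: "bool \<Rightarrow> real \<Rightarrow> real list \<Rightarrow> real list" where
  "riggings_scan b s [] = []"
| "riggings_scan b s (a # r) = (if a = 0 \<and> \<not> b then replicate ((run_len (a#r) 0 + 1) div 2) s else []) @ riggings_scan (a = 0) (s + a) r"

lemma riggings_scan_eq: "concat (map (\<lambda>p. replicate ((run_len r (p-i) + 1) div 2) (s + sum_list (take (p-i) r))) (zero_starts_from i b r)) = riggings_scan b s r"
proof (induction r arbitrary: i b s)
  case Nil then show ?case by simp
next
  case (Cons a r)
  have eq: "map (\<lambda>p. replicate ((run_len (a#r) (p-i) + 1) div 2) (s + sum_list (take (p-i) (a#r)))) (zero_starts_from (Suc i) (a=0) r)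
     = map (\<lambda>p. replicate ((run_len r (p - Suc i) + 1) div 2) ((s + a) + sum_list (take (p - Suc i) r))) (zero_starts_from (Suc i) (a=0) r)"
  proof (rule map_cong[OF refl])
    fix p assume "p \<in> set (zero_starts_from (Suc i) (a = 0) r)"
    then have "Suc i \<le> p" using zero_starts_from_ge by blast
    then have "p - i = Suc (p - Suc i)" by simp
    then show "replicate ((run_len (a#r) (p-i) + 1) div 2) (s + sum_list (take (p-i) (a#r))) =
               replicate ((run_len r (p - Suc i) + 1) div 2) ((s + a) + sum_list (take (p - Suc i) r))"
      by (simp add: run_len_def add.assoc)
  qed
  have "concat (map (\<lambda>p. replicate ((run_len (a#r) (p-i) + 1) div 2) (s + sum_list (take (p-i) (a#r)))) (zero_starts_from i b (a#r)))
     = (if a = 0 \<and> \<not> b then replicate ((run_len (a#r) 0 + 1) div 2) s else []) @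
       concat (map (\<lambda>p. replicate ((run_len (a#r) (p-i) + 1) div 2) (s + sum_list (take (p-i) (a#r)))) (zero_starts_from (Suc i) (a=0) r))"
    by auto
  also have "\<dots> = (if a = 0 \<and> \<not> b then replicate ((run_len (a#r) 0 + 1) div 2) s else []) @ riggings_scan (a = 0) (s + a) r"
    by (simp only: eq Cons.IH)
  finally show ?case by simp
qed

lemma riggings_scan_riggings: "riggings_scan b s ys = (if b then [] else replicate ((length (takeWhile (\<lambda>b. b = 0) ys) + 1) div 2) s) @ riggings s (decomp (dropWhile (\<lambda>b. b = 0) ys))"
proof (induction ys arbitrary: b s)
  case Nil then show ?case by simp
next
  case (Cons a r)
  show ?case
  proof (cases "a = 0")
    case True
    then show ?thesis using Cons.IH[of True s] by (simp add: run_len_def)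
  next
    case False
    then show ?thesis using Cons.IH[of False "s + a"] by simp
  qed
qed

lemma step_riggings_eq: "concat (map (\<lambda>p. replicate ((run_len y p + 1) div 2) (sum_list (take p y))) (zero_starts y))
   = riggings 0 (decomp (0 # y))"
proof -
  have "concat (map (\<lambda>p. replicate ((run_len y p + 1) div 2) (sum_list (take p y))) (zero_starts y))
     = concat (map (\<lambda>p. replicate ((run_len y (p-0) + 1) div 2) (0 + sum_list (take (p-0) y))) (zero_starts_from 0 False y))"
    by (simp add: zero_starts_eq)
  also have "\<dots> = riggings_scan False 0 y" by (rule riggings_scan_eq)
  finally show ?thesis by (simp add: riggings_scan_riggings)
qed

lemma alg_step_runs: "alg_step x =
   (let mu = Min (set x); y = map (\<lambda>a. a - mu) x; E = decomp (0 # y)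
    in (mu, length (riggings 0 E), riggings 0 E, grp 0 (tl E)))"
proof -
  have len: "\<And>y. (\<Sum>p\<leftarrow>zero_starts y. (run_len y p + 1) div 2) =
      length (concat (map (\<lambda>p. replicate ((run_len y p + 1) div 2) (sum_list (take p y))) (zero_starts y)))"
    by (simp add: length_concat o_def)
  show ?thesis unfolding alg_step_def Let_def
    by (simp only: len step_riggings_eq) simp
qed

section \<open>Merging entries\<close>

fun add_hd :: "real \<Rightarrow> real list \<Rightarrow> real list" where
  "add_hd a [] = []"
| "add_hd a (c # r) = (a + c) # r"

lemma add_hd_add_hd: "add_hd a (add_hd b G) = add_hd (a+b) G"
  by (cases G) (simp_all add: add.assoc)

lemma grp_add_hd: "grp a E = add_hd a (grp 0 E)"
proof (induction E arbitrary: a)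
  case Nil then show ?case by simp
next
  case (Cons e E)
  obtain p z where e: "e = (p,z)" by force
  show ?case
  proof (cases E)
    case Nil then show ?thesis using e by simp
  next
    case (Cons q rest)
    then show ?thesis using e Cons.IH[of "a+p"] Cons.IH[of p] by (simp add: add_hd_add_hd)
  qed
qed

lemma grp_Cons: "E' \<noteq> [] \<Longrightarrow> grp acc ((p,z)#E') = (if odd z then grp (acc+p) E' else (acc+p) # grp 0 E')"
  by (cases E') auto

lemma grp_pos: "a \<ge> 0 \<Longrightarrow> \<forall>e\<in>set D. fst e > 0 \<Longrightarrow> \<forall>v\<in>set (grp a D). v > 0"
  by (induction a D rule: grp.induct) auto

lemma grp_nonneg: "a \<ge> 0 \<Longrightarrow> \<forall>e\<in>set D. fst e \<ge> 0 \<Longrightarrow> \<forall>v\<in>set (grp a D). v \<ge> 0"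
  by (induction a D rule: grp.induct) auto

lemma grp_sum: "a \<ge> 0 \<Longrightarrow> \<forall>e\<in>set D. fst e \<ge> 0 \<Longrightarrow> sum_list (grp a D) \<le> a + sum_list (map fst D)"
proof (induction a D rule: grp.induct)
  case (1 acc) then show ?case by simp
next
  case (2 acc p z) then show ?case by auto
next
  case (3 acc p z q rest)
  have pn: "p \<ge> 0" "\<forall>e\<in>set (q#rest). fst e \<ge> 0" using "3.prems" by auto
  show ?case
  proof (cases "odd z")
    case True
    have "sum_list (grp (acc+p) (q#rest)) \<le> acc + p + sum_list (map fst (q#rest))"
      using "3.IH"(1)[OF True] pn "3.prems"(1) by simp
    then show ?thesis using True by simp
  next
    case False
    have "sum_list (grp 0 (q#rest)) \<le> 0 + sum_list (map fst (q#rest))"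
      using "3.IH"(2)[OF False] pn by simp
    then show ?thesis using False by simp
  qed
qed

lemma grp_hd_ge: "grp a D = c # r \<Longrightarrow> \<forall>e\<in>set D. fst e \<ge> 0 \<Longrightarrow> c \<ge> a"
proof -
  assume h: "grp a D = c # r" "\<forall>e\<in>set D. fst e \<ge> 0"
  have "add_hd a (grp 0 D) = c # r" using h(1) grp_add_hd[of a D] by metis
  then obtain c' where "grp 0 D = c' # r" "c = a + c'" by (cases "grp 0 D") auto
  moreover have "c' \<ge> 0" using grp_nonneg[of 0 D] h(2) calculation by auto
  ultimately show ?thesis by simp
qed

lemma grp_nil_even: "grp a D = [] \<Longrightarrow> even (length (undecomp D))"
proof (induction D arbitrary: a)
  case Nil then show ?case by simp
next
  case (Cons e D)
  obtain p z where e: "e = (p,z)" by force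
  show ?case
  proof (cases D)
    case Nil then show ?thesis using Cons.prems e by (auto split: if_splits)
  next
    case (Cons q rest)
    then show ?thesis using Cons.prems Cons.IH e by (auto split: if_splits)
  qed
qed

lemma len_undecomp: "length (undecomp E) = 2 * length (riggings s E) + length (grp a E)"
proof (induction E arbitrary: s a)
  case Nil then show ?case by simp
next
  case (Cons e E)
  obtain p z where e: "e = (p,z)" by force
  show ?case
  proof (cases E)
    case Nil then show ?thesis using e by auto
  next
    case (Cons q rest)
    then show ?thesis using Cons.IH e by auto
  qed
qed

section \<open>The highest weight condition\<close>

text \<open>\<open>hw_bal c b x\<close>: starting from the balance \<open>c\<close>, read \<open>x\<close> with alternating signs, the
  first one \<open>+\<close> iff \<open>b\<close>; the balance must stay nonnegative after every subtracted entry.\<close>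

fun hw_bal :: "real \<Rightarrow> bool \<Rightarrow> real list \<Rightarrow> bool" where
  "hw_bal c b [] = True"
| "hw_bal c True (a # r) = hw_bal (c + a) False r"
| "hw_bal c False (a # r) = (c - a \<ge> 0 \<and> hw_bal (c - a) True r)"

lemma hw_bal_iff: "hw_bal c True x \<longleftrightarrow> (\<forall>k. 1 \<le> k \<and> k \<le> length x div 2 \<longrightarrow> c + (\<Sum>i<k. x!(2*i) - x!(2*i+1)) \<ge> 0)"
proof (induction x arbitrary: c rule: induct_list012)
  case 1 then show ?case by simp
next
  case (2 a) then show ?case by simp
next
  case (3 a b r)
  have S: "\<And>k'. (\<Sum>i<Suc k'. (a#b#r)!(2*i) - (a#b#r)!(2*i+1)) = (a - b) + (\<Sum>i<k'. r!(2*i) - r!(2*i+1))"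
    by (subst sum.lessThan_Suc_shift) (simp add: numeral_2_eq_2)
  have L: "hw_bal c True (a#b#r) \<longleftrightarrow> c + (a - b) \<ge> 0 \<and> hw_bal (c + (a - b)) True r"
    by (simp add: algebra_simps)
  show ?case
  proof
    assume h: "hw_bal c True (a#b#r)"
    show "\<forall>k. 1 \<le> k \<and> k \<le> length (a#b#r) div 2 \<longrightarrow> c + (\<Sum>i<k. (a#b#r)!(2*i) - (a#b#r)!(2*i+1)) \<ge> 0"
    proof (intro allI impI)
      fix k assume k: "1 \<le> k \<and> k \<le> length (a#b#r) div 2"
      then obtain k' where k': "k = Suc k'" by (cases k) auto
      show "c + (\<Sum>i<k. (a#b#r)!(2*i) - (a#b#r)!(2*i+1)) \<ge> 0"
      proof (cases k')
        case 0 then show ?thesis using h L k' S by simp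
      next
        case (Suc k'')
        have "c + (a - b) + (\<Sum>i<k'. r!(2*i) - r!(2*i+1)) \<ge> 0"
          using h L "3.IH"(1)[of "c + (a - b)"] k k' Suc by auto
        then show ?thesis using k' S by simp
      qed
    qed
  next
    assume h: "\<forall>k. 1 \<le> k \<and> k \<le> length (a#b#r) div 2 \<longrightarrow> c + (\<Sum>i<k. (a#b#r)!(2*i) - (a#b#r)!(2*i+1)) \<ge> 0"
    have h1: "c + (a - b) \<ge> 0" using h[rule_format, of 1] S[of 0] by simp
    have "\<forall>k. 1 \<le> k \<and> k \<le> length r div 2 \<longrightarrow> c + (a - b) + (\<Sum>i<k. r!(2*i) - r!(2*i+1)) \<ge> 0"
    proof (intro allI impI)
      fix k assume "1 \<le> k \<and> k \<le> length r div 2"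
      then have "c + (\<Sum>i<Suc k. (a#b#r)!(2*i) - (a#b#r)!(2*i+1)) \<ge> 0" using h by auto
      then show "c + (a - b) + (\<Sum>i<k. r!(2*i) - r!(2*i+1)) \<ge> 0" using S by simp
    qed
    then show "hw_bal c True (a#b#r)" using L h1 "3.IH"(1) by simp
  qed
qed

lemma highest_weight_hw_bal: "highest_weight x \<longleftrightarrow> hw_bal 0 True x"
  unfolding highest_weight_def hw_bal_iff by simp

lemma highest_weight_add: "highest_weight (map (\<lambda>a. a + d) x) \<longleftrightarrow> highest_weight x"
proof -
  have "\<And>k. k \<le> length x div 2 \<Longrightarrow> (\<Sum>i<k. map (\<lambda>a. a + d) x ! (2*i) - map (\<lambda>a. a + d) x ! (2*i+1)) = (\<Sum>i<k. x ! (2*i) - x ! (2*i+1))"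
    by (rule sum.cong) auto
  then show ?thesis unfolding highest_weight_def by auto
qed

lemma hw_bal_zeros: "c \<ge> 0 \<Longrightarrow> hw_bal c b (replicate n 0 @ l) = hw_bal c (if even n then b else \<not> b) l"
proof (induction n arbitrary: b)
  case 0 then show ?case by simp
next
  case (Suc n)
  then show ?case by (cases b) auto
qed

lemma hw_bal_grp: "c \<ge> 0 \<Longrightarrow> a \<ge> 0 \<Longrightarrow> \<forall>e\<in>set D. fst e \<ge> 0 \<Longrightarrow> (\<not> b \<longrightarrow> c - a \<ge> 0) \<Longrightarrow>
  hw_bal (if b then c + a else c - a) b (undecomp D) \<Longrightarrow> hw_bal c b (grp a D)"
proof (induction D arbitrary: c b a)
  case Nil then show ?case by simp
next
  case (Cons e D')
  obtain p z where e: "e = (p,z)" by force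
  have p0: "p \<ge> 0" using Cons.prems e by auto
  have fD': "\<forall>e\<in>set D'. fst e \<ge> 0" using Cons.prems by auto
  define c2 where "c2 = (if b then c + a + p else c - a - p)"
  have y: "hw_bal (if b then c + a else c - a) b (p # replicate z 0 @ undecomp D')"
    using Cons.prems e by simp
  have c2nn: "c2 \<ge> 0" and ytail: "hw_bal c2 (if even z then \<not> b else b) (undecomp D')"
  proof -
    show "c2 \<ge> 0" using y c2_def Cons.prems p0 by (cases b) auto
    then show "hw_bal c2 (if even z then \<not> b else b) (undecomp D')"
      using y c2_def hw_bal_zeros[of c2] by (cases b) auto
  qed
  show ?case
  proof (cases D')
    case Nil
    then show ?thesis using c2nn c2_def e by (cases b) auto
  next
    case (Cons q rest)
    show ?thesis
    proof (cases "odd z")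
      case True
      have "hw_bal c b (grp (a + p) D')"
        using Cons.IH[of c "a + p" b] fD' Cons.prems p0 c2nn c2_def ytail True
        by (cases b) (auto simp: add.assoc diff_diff_eq)
      then show ?thesis using e Cons True by simp
    next
      case False
      have "hw_bal c2 (\<not> b) (grp 0 D')"
        using Cons.IH[of c2 0 "\<not> b"] fD' c2nn ytail False by (cases b) auto
      then show ?thesis using e Cons False c2_def c2nn by (cases b) (auto simp: algebra_simps)
    qed
  qed
qed

lemma hw_bal_undecomp: "c \<ge> 0 \<Longrightarrow> a \<ge> 0 \<Longrightarrow> \<forall>e\<in>set D. fst e \<ge> 0 \<Longrightarrow> (b \<longleftrightarrow> even (length (undecomp D))) \<Longrightarrow>
  hw_bal c b (grp a D) \<Longrightarrow> hw_bal (if b then c + a else c - a) b (undecomp D)"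
proof (induction D arbitrary: c b a)
  case Nil then show ?case by simp
next
  case (Cons e D')
  obtain p z where e: "e = (p,z)" by force
  have p0: "p \<ge> 0" using Cons.prems e by auto
  have fD': "\<forall>e\<in>set D'. fst e \<ge> 0" using Cons.prems by auto
  define c2 where "c2 = (if b then c + a + p else c - a - p)"
  have lenD: "length (undecomp (e # D')) = Suc (z + length (undecomp D'))" using e by simp
  have key: "c2 \<ge> 0 \<and> hw_bal c2 (if even z then \<not> b else b) (undecomp D')"
  proof (cases D')
    case Nil
    show ?thesis
    proof (cases b)
      case True then show ?thesis using c2_def Cons.prems p0 Nil by simp
    next
      case False
      then have "even z" using Cons.prems(4) lenD Nil by simp
      then have "grp a (e # D') = [a + p]" using e Nil by simp
      then have "c - (a + p) \<ge> 0" using Cons.prems(5) False by simp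
      then show ?thesis using c2_def False Nil by simp
    qed
  next
    case (Cons q rest)
    show ?thesis
    proof (cases "odd z")
      case True
      have gx: "hw_bal c b (grp (a + p) D')" using Cons.prems(5) e Cons True by simp
      have par: "b \<longleftrightarrow> even (length (undecomp D'))" using Cons.prems(4) lenD True by simp
      have ih: "hw_bal (if b then c + (a + p) else c - (a + p)) b (undecomp D')"
        using Cons.IH[of c "a + p" b] fD' Cons.prems(1,2) p0 gx par by simp
      have c2nn: "c2 \<ge> 0"
      proof (cases b)
        case True then show ?thesis using c2_def Cons.prems p0 by simp
      next
        case False
        have "grp (a + p) D' \<noteq> []" using grp_nil_even par False by blast
        then obtain h r where hr: "grp (a + p) D' = h # r" by (cases "grp (a + p) D'") auto
        have "h \<ge> a + p" using grp_hd_ge[OF hr fD'] .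
        moreover have "c - h \<ge> 0" using gx hr False by simp
        ultimately show ?thesis using c2_def False by simp
      qed
      then show ?thesis using ih c2_def True by (cases b) (auto simp: diff_diff_eq add.assoc)
    next
      case False
      have gx: "hw_bal c b ((a + p) # grp 0 D')" using Cons.prems(5) e Cons False by simp
      then have c2nn: "c2 \<ge> 0" and gx2: "hw_bal c2 (\<not> b) (grp 0 D')"
        using c2_def Cons.prems p0 by (cases b; auto simp: diff_diff_eq add.assoc)+
      have par: "\<not> b \<longleftrightarrow> even (length (undecomp D'))" using Cons.prems(4) lenD False by simp
      have "hw_bal (if \<not> b then c2 + 0 else c2 - 0) (\<not> b) (undecomp D')"
        using Cons.IH[of c2 0 "\<not> b"] fD' c2nn gx2 par by simp
      then show ?thesis using c2nn False by (cases b) auto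
    qed
  qed
  have "hw_bal (if b then c + a else c - a) b (p # replicate z 0 @ undecomp D')"
    using key c2_def hw_bal_zeros[of c2] by (cases b) (auto simp: diff_diff_eq add.assoc)
  then show ?case using e by simp
qed

lemma hw_bal_leading_zeros_even:
  assumes hw: "hw_bal 0 True (replicate z 0 @ undecomp D)"
    and len: "even (z + length (undecomp D))" and pos: "\<forall>e\<in>set D. fst e > 0"
  shows "even z"
proof (rule ccontr)
  assume odd: "odd z"
  then have "D \<noteq> []" using len by auto
  then obtain p z' D' where D: "D = (p, z') # D'" by (metis list.exhaust prod.exhaust)
  have "hw_bal 0 False (undecomp D)" using hw hw_bal_zeros[of 0 True z] odd by simp
  then show False using D pos by simp
qed

section \<open>Inverting one step\<close>

text \<open>\<open>rebuild (p, z) xs js\<close> rebuilds a run decomposition whose first entry is \<open>p\<close> followed by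
  \<open>z\<close> zeros, from the merged entries \<open>xs\<close> that follow \<open>p\<close> and the riggings \<open>js\<close>, measured
  from the end of \<open>p\<close>.\<close>

function rebuild :: "real \<times> nat \<Rightarrow> real list \<Rightarrow> real list \<Rightarrow> (real \<times> nat) list" where
  "rebuild (p,z) xs (j # js) = (if j = 0 then rebuild (p, z+2) xs js else
      (case xs of [] \<Rightarrow> (p,z) # rebuild (j,1) [] (map (\<lambda>v. v - j) js)
       | c # xs' \<Rightarrow> (if j < c then (p,z) # rebuild (j,1) ((c-j) # xs') (map (\<lambda>v. v - j) js)
                   else (p,z) # rebuild (c,0) xs' (map (\<lambda>v. v - c) (j # js)))))"
| "rebuild (p,z) (c # xs) [] = (p,z) # rebuild (c,0) xs []"
| "rebuild (p,z) [] [] = [(p,z)]"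
  by pat_completeness auto
termination
  by (relation "measure (\<lambda>(_, xs, js). length xs + length js)") auto

lemma rebuild_not_Nil: "rebuild P xs js \<noteq> []"
  by (induction P xs js rule: rebuild.induct) (auto split: list.splits)

lemma rebuild_hd: "\<exists>k rest. rebuild (p,z) xs js = (p, z + 2*k) # rest"
proof (induction "(p,z)" xs js arbitrary: p z rule: rebuild.induct)
  case (1 p z xs j js)
  show ?case
  proof (cases "j = 0")
    case True
    then obtain k rest where "rebuild (p, z+2) xs js = (p, z+2+2*k) # rest" using 1 by blast
    then show ?thesis using True by (intro exI[where x="Suc k"]) auto
  next
    case False then show ?thesis by (auto split: list.splits intro: exI[where x=0])
  qed
qed auto

lemma rebuild_riggings: "riggings s (rebuild (p,z) xs js) = replicate ((z+1) div 2) (s+p) @ map (\<lambda>v. s+p+v) js"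
proof (induction "(p,z)" xs js arbitrary: p z s rule: rebuild.induct)
  case (1 p z xs j js)
  show ?case
  proof (cases "j = 0")
    case True
    have "(z + 2 + 1) div 2 = Suc ((z+1) div 2)" by simp
    then show ?thesis using True 1 by (simp add: replicate_app_Cons_same)
  next
    case False
    show ?thesis
    proof (cases xs)
      case Nil
      then show ?thesis using False 1 by (simp add: o_def add.assoc)
    next
      case (Cons c xs')
      then show ?thesis using False 1 by (cases "j < c") (simp_all add: o_def add.assoc)
    qed
  qed
next
  case (2 p z c xs) then show ?case by (simp add: add.assoc)
next
  case (3 p z) then show ?case by simp
qed

lemma rebuild_grp: "grp acc (rebuild (p,z) xs js) = (if even z then (acc+p) # xs else add_hd (acc+p) xs)"
proof (induction "(p,z)" xs js arbitrary: p z acc rule: rebuild.induct)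
  case (1 p z xs j js)
  show ?case
  proof (cases "j = 0")
    case True
    then show ?thesis using 1 by simp
  next
    case False
    show ?thesis
    proof (cases xs)
      case Nil
      then show ?thesis using False 1 by (simp add: grp_Cons rebuild_not_Nil)
    next
      case (Cons c xs')
      show ?thesis
      proof (cases "j < c")
        case True
        then show ?thesis using False Cons 1 by (simp add: grp_Cons rebuild_not_Nil)
      next
        case f2: False
        have eq: "rebuild (p,z) xs (j#js) = (p,z) # rebuild (c,0) xs' (map (\<lambda>v. v - c) (j # js))"
          using False f2 Cons by simp
        have ih: "\<And>a. grp a (rebuild (c,0) xs' ((j - c) # map (\<lambda>v. v - c) js)) = (a + c) # xs'"
          using False f2 Cons 1(4) by simp
        show ?thesis unfolding eq using Cons by (simp add: grp_Cons rebuild_not_Nil ih del: rebuild.simps)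
      qed
    qed
  qed
next
  case (2 p z c xs) then show ?case by (simp add: grp_Cons rebuild_not_Nil)
next
  case (3 p z) then show ?case by simp
qed

lemma rebuild_split_less: "j \<noteq> 0 \<Longrightarrow> j < c \<Longrightarrow> rebuild (p,z) (c#xs) (j#js) = (p,z) # rebuild (j,1) ((c-j)#xs) (map (\<lambda>v. v - j) js)"
  by simp

lemma rebuild_split_ge: "j \<noteq> 0 \<Longrightarrow> \<not> j < c \<Longrightarrow> rebuild (p,z) (c#xs) (j#js) = (p,z) # rebuild (c,0) xs (map (\<lambda>v. v - c) (j#js))"
  by (simp del: list.map)

lemma rebuild_split_Nil: "j \<noteq> 0 \<Longrightarrow> rebuild (p,z) [] (j#js) = (p,z) # rebuild (j,1) [] (map (\<lambda>v. v - j) js)"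
  by simp

lemma rebuild_zero: "rebuild (p,z) xs (0#js) = rebuild (p,z+2) xs js"
  by simp

lemma rebuild_zeros: "rebuild (p,z) xs (replicate k 0 @ js) = rebuild (p, z + 2*k) xs js"
  by (induction k arbitrary: z) (simp_all del: rebuild.simps add: rebuild_zero)

lemma sorted_map_diff_const: "sorted js \<Longrightarrow> sorted (map (\<lambda>v. v - (j::real)) js)"
  by (simp add: sorted_map sorted_wrt_mono_rel[of _ "(\<le>)"])

lemma rebuild_pos_from_tl: "\<forall>e\<in>set (tl (rebuild (q,w) X Y)). fst e > 0 \<Longrightarrow> q > 0 \<Longrightarrow> \<forall>e\<in>set (rebuild (q,w) X Y). fst e > 0"
proof -
  assume a: "\<forall>e\<in>set (tl (rebuild (q,w) X Y)). fst e > 0" "q > 0"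
  obtain k rest where "rebuild (q,w) X Y = (q, w+2*k) # rest" using rebuild_hd by blast
  then show ?thesis using a by auto
qed

lemma rebuild_tl_pos: "\<forall>c\<in>set xs. c > 0 \<Longrightarrow> sorted js \<Longrightarrow> \<forall>v\<in>set js. v \<ge> 0 \<Longrightarrow>
   \<forall>e\<in>set (tl (rebuild (p,z) xs js)). fst e > 0"
proof (induction "(p,z)" xs js arbitrary: p z rule: rebuild.induct)
  case (1 p z xs j js)
  have sj: "sorted js" "\<forall>v\<in>set js. j \<le> v" using "1.prems"(2) by auto
  have j0: "j \<ge> 0" using "1.prems"(3) by auto
  show ?case
  proof (cases "j = 0")
    case True
    then show ?thesis using 1(1) "1.prems" sj by (simp add: rebuild_zero del: rebuild.simps)
  next
    case False
    have jp: "j > 0" using False j0 by simp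
    show ?thesis
    proof (cases xs)
      case Nil
      have "\<forall>e\<in>set (tl (rebuild (j,1) [] (map (\<lambda>v. v - j) js))). fst e > 0"
        using 1(2)[OF False Nil] Nil sj by (simp add: sorted_map_diff_const)
      then have "\<forall>e\<in>set (rebuild (j,1) [] (map (\<lambda>v. v - j) js)). fst e > 0"
        using jp rebuild_pos_from_tl by blast
      then show ?thesis using Nil False by (simp only: rebuild_split_Nil) simp
    next
      case (Cons c xs')
      show ?thesis
      proof (cases "j < c")
        case True
        have "\<forall>e\<in>set (tl (rebuild (j,1) ((c-j)#xs') (map (\<lambda>v. v - j) js))). fst e > 0"
          using 1(3)[OF False Cons True] Cons sj True "1.prems"(1) by (simp add: sorted_map_diff_const)
        then have "\<forall>e\<in>set (rebuild (j,1) ((c-j)#xs') (map (\<lambda>v. v - j) js)). fst e > 0"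
          using jp rebuild_pos_from_tl by blast
        then show ?thesis using Cons False True by (simp only: rebuild_split_less) simp
      next
        case f2: False
        have h: "\<forall>e\<in>set (tl (rebuild (c,0) xs' (map (\<lambda>v. v - c) (j#js)))). fst e > 0"
          using 1(4)[OF False Cons f2] Cons sj f2 "1.prems"(1,2) order.trans[of c j] less_le_not_le
          by (auto simp: sorted_map_diff_const simp del: list.map)
        have cp: "c > 0" using Cons "1.prems"(1) by simp
        have "\<forall>e\<in>set (rebuild (c,0) xs' (map (\<lambda>v. v - c) (j#js))). fst e > 0"
          using rebuild_pos_from_tl[OF h cp] .
        then show ?thesis using Cons False f2 by (simp only: rebuild_split_ge) simp
      qed
    qed
  qed
next
  case (2 p z c xs)
  then have "\<forall>e\<in>set (rebuild (c,0) xs []). fst e > 0" using rebuild_pos_from_tl by simp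
  then show ?case by simp
next
  case (3 p z) then show ?case by simp
qed

lemma rebuild_sum_le: "\<forall>c\<in>set xs. c > 0 \<Longrightarrow> sorted js \<Longrightarrow> \<forall>v\<in>set js. 0 \<le> v \<and> v \<le> M \<Longrightarrow>
   sum_list xs \<le> M \<Longrightarrow> 0 \<le> M \<Longrightarrow> sum_list (map fst (rebuild (p,z) xs js)) \<le> p + M"
proof (induction "(p,z)" xs js arbitrary: p z M rule: rebuild.induct)
  case (1 p z xs j js)
  have sj: "sorted js" "\<forall>v\<in>set js. j \<le> v" using "1.prems"(2) by auto
  have j0: "j \<ge> 0" "j \<le> M" using "1.prems"(3) by auto
  show ?case
  proof (cases "j = 0")
    case True
    then show ?thesis using 1(1) "1.prems" sj by (simp add: rebuild_zero del: rebuild.simps)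
  next
    case False
    show ?thesis
    proof (cases xs)
      case Nil
      have "sum_list (map fst (rebuild (j,1) [] (map (\<lambda>v. v - j) js))) \<le> j + (M - j)"
        using 1(2)[OF False Nil, of "M - j"] Nil sj "1.prems" j0 by (auto simp: sorted_map_diff_const)
      then show ?thesis using Nil False by (simp only: rebuild_split_Nil) simp
    next
      case (Cons c xs')
      have sxs: "sum_list xs' \<ge> 0" using "1.prems"(1) Cons by (auto intro: sum_list_nonneg less_imp_le)
      show ?thesis
      proof (cases "j < c")
        case True
        have "sum_list (map fst (rebuild (j,1) ((c-j)#xs') (map (\<lambda>v. v - j) js))) \<le> j + (M - j)"
          using 1(3)[OF False Cons True, of "M - j"] Cons sj True "1.prems" j0 by (auto simp: sorted_map_diff_const)
        then show ?thesis using Cons False True by (simp only: rebuild_split_less) simp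
      next
        case f2: False
        have "sum_list (map fst (rebuild (c,0) xs' (map (\<lambda>v. v - c) (j#js)))) \<le> c + (M - c)"
          using 1(4)[OF False Cons f2, of "M - c"] Cons sj f2 "1.prems" j0 sxs order.trans[of c j]
          by (auto simp: sorted_map_diff_const simp del: list.map)
        then show ?thesis using Cons False f2 by (simp only: rebuild_split_ge) simp
      qed
    qed
  qed
next
  case (2 p z c xs)
  have sxs: "sum_list xs \<ge> 0" using "2.prems"(1) by (auto intro: sum_list_nonneg less_imp_le)
  have "sum_list (map fst (rebuild (c,0) xs [])) \<le> c + (M - c)"
    using 2(1)[of "M - c"] "2.prems" sxs by auto
  then show ?case by simp
next
  case (3 p z) then show ?case by simp
qed

lemma rebuild_even_run:
  assumes p2: "p2 > 0" and J0nn: "\<forall>v\<in>set J0. v \<ge> 0"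
  shows "rebuild (p,z) (p2 # G) (replicate m p2 @ map (\<lambda>v. p2 + v) J0) = (p,z) # rebuild (p2, 2*m) G J0"
proof (cases m)
  case 0
  show ?thesis
  proof (cases J0)
    case Nil then show ?thesis using 0 by simp
  next
    case (Cons j0 J0')
    have "p2 + j0 \<noteq> 0" "\<not> p2 + j0 < p2" using J0nn Cons p2 by auto
    then show ?thesis
      using 0 Cons rebuild_split_ge[of "p2+j0" p2 p z G "map (\<lambda>v. p2 + v) J0'"]
      by (simp del: rebuild.simps add: o_def)
  qed
next
  case (Suc m')
  have "rebuild (p,z) (p2 # G) (replicate m p2 @ map (\<lambda>v. p2 + v) J0)
      = (p,z) # rebuild (p2,0) G (map (\<lambda>v. v - p2) (replicate m p2 @ map (\<lambda>v. p2 + v) J0))"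
    using Suc p2 rebuild_split_ge[of p2 p2 p z G "replicate m' p2 @ map (\<lambda>v. p2 + v) J0"]
    by (simp del: rebuild.simps)
  also have "map (\<lambda>v. v - p2) (replicate m p2 @ map (\<lambda>v. p2 + v) J0) = replicate m 0 @ J0"
    by (simp add: o_def)
  finally show ?thesis by (simp add: rebuild_zeros)
qed

lemma rebuild_odd_run:
  assumes p2: "p2 > 0" and Gpos: "\<forall>v\<in>set G. v > 0"
  shows "rebuild (p,z) (add_hd p2 G) (replicate (Suc m) p2 @ map (\<lambda>v. p2 + v) J0)
    = (p,z) # rebuild (p2, 2*m+1) G J0"
proof -
  have tail: "map (\<lambda>v. v - p2) (replicate m p2 @ map (\<lambda>v. p2 + v) J0) = replicate m 0 @ J0"
    by (simp add: o_def)
  have "rebuild (p2,1) G (replicate m 0 @ J0) = rebuild (p2, 2*m+1) G J0"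
    by (simp add: rebuild_zeros)
  moreover have "rebuild (p,z) (add_hd p2 G) (replicate (Suc m) p2 @ map (\<lambda>v. p2 + v) J0)
      = (p,z) # rebuild (p2,1) G (replicate m 0 @ J0)"
  proof (cases G)
    case Nil
    then show ?thesis
      using p2 tail rebuild_split_Nil[of p2 p z "replicate m p2 @ map (\<lambda>v. p2 + v) J0"]
      by (simp del: rebuild.simps)
  next
    case (Cons c r)
    then show ?thesis
      using p2 Gpos tail rebuild_split_less[of p2 "p2 + c" p z r "replicate m p2 @ map (\<lambda>v. p2 + v) J0"]
      by (simp del: rebuild.simps)
  qed
  ultimately show ?thesis by simp
qed

lemma rebuild_grp_riggings: "\<forall>e\<in>set D. fst e > 0 \<Longrightarrow> rebuild (p,z) (grp 0 D) (riggings 0 D) = (p,z) # D"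
proof (induction D arbitrary: p z)
  case Nil then show ?case by simp
next
  case (Cons e D')
  obtain p2 z2 where e: "e = (p2,z2)" by force
  have p2: "p2 > 0" and posD': "\<forall>e\<in>set D'. fst e > 0" using Cons.prems e by auto
  have J0nn: "\<forall>v\<in>set (riggings 0 D'). v \<ge> 0"
    using riggings_bounds[of D' 0] posD' by (auto simp: less_imp_le)
  have riggings_e: "riggings 0 (e # D') = replicate ((z2+1) div 2) p2 @ map (\<lambda>v. p2 + v) (riggings 0 D')"
    using e riggings_shift[of p2 D'] by simp
  show ?case
  proof (cases "odd z2")
    case False
    then have "grp 0 (e # D') = p2 # grp 0 D'" using e by (cases D') auto
    moreover have "z2 = 2 * ((z2+1) div 2)" using False by presburger
    ultimately show ?thesis
      using rebuild_even_run[OF p2 J0nn] riggings_e Cons.IH[OF posD'] e by metis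
  next
    case True
    then obtain m where "z2 = 2*m+1" by (rule oddE)
    then have m: "(z2+1) div 2 = Suc m" "z2 = 2*m+1" by simp_all
    have "grp 0 (e # D') = add_hd p2 (grp 0 D')"
      using True e grp_add_hd[of p2 D'] by (cases D') auto
    moreover have "\<forall>v\<in>set (grp 0 D'). v > 0" using grp_pos[of 0 D'] posD' by simp
    ultimately show ?thesis
      using rebuild_odd_run[OF p2] riggings_e m Cons.IH[OF posD'] e by metis
  qed
qed

lemma rebuild_origin:
  assumes p1: "\<forall>a\<in>set x1. a > 0" and sJ: "sorted J" and Jnn: "\<forall>v\<in>set J. v \<ge> 0"
  obtains k D where "rebuild (0,0) x1 J = (0, 2*k) # D" "\<forall>e\<in>set D. fst e > 0"
    "J = replicate k 0 @ riggings 0 D" "grp 0 D = x1"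
proof -
  obtain k D where ED: "rebuild (0,0) x1 J = (0, 2*k) # D" using rebuild_hd[of 0 0 x1 J] by auto
  have Dpos: "\<forall>e\<in>set D. fst e > 0" using rebuild_tl_pos[OF p1 sJ Jnn, of 0 0] ED by simp
  have "(2*k + 1) div 2 = k" by presburger
  then have J: "J = replicate k 0 @ riggings 0 D" using rebuild_riggings[of 0 0 0 x1 J] ED by simp
  have grpE: "grp 0 ((0, 2*k) # D) = 0 # x1" using rebuild_grp[of 0 0 0 x1 J] ED by simp
  have "grp 0 D = x1"
  proof (cases D)
    case Nil then show ?thesis using grpE by simp
  next
    case (Cons q r) then show ?thesis using grpE grp_Cons[of D 0 0 "2*k"] by simp
  qed
  then show ?thesis using that ED Dpos J by blast
qed

definition config :: "real list \<Rightarrow> nat \<Rightarrow> bool" where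
  "config x N \<longleftrightarrow> (\<forall>a\<in>set x. a > 0) \<and> highest_weight x \<and> length x = 2*N \<and> N \<ge> 1"

lemma sum_list_map_diff_const: "sum_list (map (\<lambda>a. a - m) x) = sum_list x - real (length x) * (m::real)"
  by (induction x) (auto simp: algebra_simps)

lemma sum_list_map_add_const: "sum_list (map (\<lambda>a. a + m) x) = sum_list x + real (length x) * (m::real)"
  by (induction x) (auto simp: algebra_simps)

definition unstep :: "real \<Rightarrow> real list \<Rightarrow> real list \<Rightarrow> real list" where
  "unstep mu J x1 = map (\<lambda>a. a + mu) (tl (undecomp (rebuild (0,0) x1 J)))"

lemma alg_step_shape:
  assumes x: "config x N" and st: "alg_step x = (mu, nu, J, x1)"
  obtains z0 D where "mu > 0" "map (\<lambda>a. a - mu) x = replicate z0 0 @ undecomp D"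
    "0 \<in> set (map (\<lambda>a. a - mu) x)" "\<forall>e\<in>set D. fst e > 0" "even z0"
    "J = replicate (z0 div 2) 0 @ riggings 0 D" "nu = length J" "x1 = grp 0 D"
    "hw_bal 0 True (undecomp D)"
proof -
  have pos: "\<forall>a\<in>set x. a > 0" and hw: "highest_weight x" and len: "length x = 2*N"
    and N1: "N \<ge> 1"
    using x unfolding config_def by auto
  define y where "y = map (\<lambda>a. a - mu) x"
  have mu: "mu = Min (set x)" using st unfolding alg_step_runs Let_def by auto
  have "x \<noteq> []" using len N1 by auto
  then have min_in: "mu \<in> set x" and min_le: "\<forall>a\<in>set x. mu \<le> a" using mu by auto
  have mpos: "mu > 0" using min_in pos by blast
  have ynn: "\<forall>v\<in>set y. v \<ge> 0" using min_le y_def by auto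
  have y0: "0 \<in> set y" using min_in y_def by force
  obtain z0 D where E: "decomp (0 # y) = (0, z0) # D" and yeq: "y = replicate z0 0 @ undecomp D"
    and Dpos: "\<forall>e\<in>set D. fst e > 0"
    using decomp_Cons_zero[OF ynn] by blast
  have stv: "J = riggings 0 ((0, z0) # D)" "nu = length J" "x1 = grp 0 D"
    using st E unfolding alg_step_runs Let_def mu[symmetric] y_def[symmetric] by auto
  have hwy: "hw_bal 0 True y"
    using hw highest_weight_add[of "- mu" x] highest_weight_hw_bal unfolding y_def by simp
  have z0even: "even z0"
  proof (rule hw_bal_leading_zeros_even[OF _ _ Dpos])
    show "hw_bal 0 True (replicate z0 0 @ undecomp D)" using hwy yeq by simp
    have "z0 + length (undecomp D) = 2 * N" using arg_cong[OF yeq, of length] len y_def by simp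
    then show "even (z0 + length (undecomp D))" by simp
  qed
  have "(z0 + 1) div 2 = z0 div 2" using z0even by presburger
  then have "J = replicate (z0 div 2) 0 @ riggings 0 D" using stv(1) by simp
  moreover have "hw_bal 0 True (undecomp D)" using hwy yeq hw_bal_zeros[of 0 True z0] z0even by simp
  ultimately show ?thesis using that mpos yeq y0 Dpos z0even stv(2,3) unfolding y_def by blast
qed

lemma step_props:
  assumes x: "config x N" and st: "alg_step x = (mu, nu, J, x1)"
  shows "mu > 0 \<and> nu = length J \<and> 1 \<le> nu \<and> nu \<le> N \<and> sorted J
    \<and> (\<forall>v\<in>set J. 0 \<le> v \<and> v \<le> sum_list x - 2 * real N * mu)
    \<and> (N - nu \<noteq> 0 \<longrightarrow> config x1 (N - nu)) \<and> length x1 = 2*(N - nu)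
    \<and> sum_list x1 \<le> sum_list x - 2 * real N * mu \<and> x = unstep mu J x1"
proof -
  obtain z0 D where mpos: "mu > 0" and yeq: "map (\<lambda>a. a - mu) x = replicate z0 0 @ undecomp D"
    and y0: "0 \<in> set (map (\<lambda>a. a - mu) x)" and Dpos: "\<forall>e\<in>set D. fst e > 0" and z0even: "even z0"
    and Jeq: "J = replicate (z0 div 2) 0 @ riggings 0 D" and nu: "nu = length J"
    and x1: "x1 = grp 0 D" and hwD: "hw_bal 0 True (undecomp D)"
    using alg_step_shape[OF x st] by blast
  have len: "length x = 2*N" using x unfolding config_def by simp
  have Dnn: "\<forall>e\<in>set D. fst e \<ge> 0" using Dpos less_imp_le by blast
  have lenrel: "2*N = 2 * length J + length x1"
    using arg_cong[OF yeq, of length] len len_undecomp[of D 0 0] Jeq x1 z0even by simp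
  have nu1: "1 \<le> length J"
  proof (cases "z0 = 0")
    case True
    then have "0 \<in> set (undecomp D)" using y0 yeq by simp
    then have "riggings 0 D \<noteq> []" using riggings_not_Nil Dpos by (metis less_irrefl)
    then show ?thesis using Jeq by (cases "riggings 0 D") auto
  next
    case False
    then show ?thesis using z0even Jeq by (cases "z0 div 2") auto
  qed
  have "sum_list x - 2 * real N * mu = sum_list (map (\<lambda>a. a - mu) x)"
    using sum_list_map_diff_const len by simp
  also have "\<dots> = sum_list (map fst D)" using yeq sum_undecomp by (simp add: sum_list_replicate)
  finally have sum_D: "sum_list x - 2 * real N * mu = sum_list (map fst D)" .
  have "sum_list (map fst D) \<ge> 0" using Dnn by (intro sum_list_nonneg) auto
  then have JB: "\<forall>v\<in>set J. 0 \<le> v \<and> v \<le> sum_list x - 2 * real N * mu"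
    using riggings_bounds[OF Dnn, of 0] Jeq sum_D by auto
  have sJ: "sorted J"
    using Jeq riggings_sorted[OF Dnn, of 0] riggings_bounds[OF Dnn, of 0] by (auto simp: sorted_append)
  have x1pos: "\<forall>a\<in>set x1. a > 0" using grp_pos[of 0 D] Dpos x1 by simp
  have x1sum: "sum_list x1 \<le> sum_list x - 2 * real N * mu"
    using grp_sum[of 0 D] Dnn x1 sum_D by simp
  have hwx1: "highest_weight x1"
    using hw_bal_grp[of 0 0 D True] Dnn hwD x1 highest_weight_hw_bal by simp
  have "rebuild (0,0) x1 J = rebuild (0, 0 + 2 * (z0 div 2)) (grp 0 D) (riggings 0 D)"
    unfolding Jeq x1 rebuild_zeros ..
  also have "0 + 2 * (z0 div 2) = z0" using z0even by simp
  also have "rebuild (0, z0) (grp 0 D) (riggings 0 D) = (0, z0) # D"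
    using rebuild_grp_riggings Dpos by simp
  finally have "unstep mu J x1 = map (\<lambda>a. a + mu) (map (\<lambda>a. a - mu) x)"
    unfolding unstep_def using yeq by simp
  then have rec: "x = unstep mu J x1" by (simp add: o_def)
  have lenx1: "length x1 = 2*(N - nu)" and nuN: "nu \<le> N" using lenrel nu by simp_all
  have "N - nu \<noteq> 0 \<longrightarrow> config x1 (N - nu)" using x1pos hwx1 lenx1 unfolding config_def by auto
  then show ?thesis using mpos nu nu1 nuN sJ JB lenx1 x1sum rec by blast
qed

lemma step_unstep:
  assumes mu: "mu > 0" and Jne: "J \<noteq> []" and sJ: "sorted J" and Jb: "\<forall>v\<in>set J. 0 \<le> v \<and> v \<le> M"
    and p1: "\<forall>a\<in>set x1. a > 0" and h1: "highest_weight x1" and l1: "length x1 = 2*N1"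
    and s1: "sum_list x1 \<le> M"
  shows "alg_step (unstep mu J x1) = (mu, length J, J, x1) \<and> (\<forall>a\<in>set (unstep mu J x1). a > 0)
    \<and> highest_weight (unstep mu J x1) \<and> length (unstep mu J x1) = 2*(length J + N1)
    \<and> sum_list (unstep mu J x1) \<le> M + 2 * real (length J + N1) * mu"
proof -
  have Jnn: "\<forall>v\<in>set J. v \<ge> 0" using Jb by auto
  obtain k D where ED: "rebuild (0,0) x1 J = (0, 2*k) # D" and Dpos: "\<forall>e\<in>set D. fst e > 0"
    and J: "J = replicate k 0 @ riggings 0 D" and x1: "grp 0 D = x1"
    using rebuild_origin[OF p1 sJ Jnn] by blast
  have Dnn: "\<forall>e\<in>set D. fst e \<ge> 0" using Dpos less_imp_le by blast
  define y where "y = replicate (2*k) 0 @ undecomp D"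
  have xeq: "unstep mu J x1 = map (\<lambda>a. a + mu) y" unfolding unstep_def y_def ED by simp
  have ynn: "\<forall>v\<in>set y. v \<ge> 0"
  proof -
    have "\<forall>v\<in>set (undecomp D). v \<ge> 0" using Dnn by (induction D rule: undecomp.induct) auto
    then show ?thesis using y_def by auto
  qed
  have y0: "0 \<in> set y"
  proof (cases "k = 0")
    case True
    then have "0 \<in> set (undecomp D)" using riggings_Nil_if Jne J by fastforce
    then show ?thesis using y_def by simp
  next
    case False then show ?thesis using y_def by simp
  qed
  have minx: "Min (set (unstep mu J x1)) = mu"
    unfolding xeq by (rule Min_eqI) (use ynn y0 in auto)
  have ymap: "map (\<lambda>a. a - mu) (unstep mu J x1) = y" unfolding xeq by (simp add: o_def)
  have dec: "decomp (0 # y) = (0, 2*k) # D"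
    using decomp_undecomp_Cons[of D 0 "2*k"] Dpos unfolding y_def by (simp add: less_imp_neq[symmetric])
  have step: "alg_step (unstep mu J x1) = (mu, length J, J, x1)"
    unfolding alg_step_runs Let_def minx ymap dec using J x1 by (simp add: mult_2)
  have leny: "length y = 2 * length J + length x1"
    using len_undecomp[of D 0 0] J x1 y_def by simp
  have lenx: "length (unstep mu J x1) = 2*(length J + N1)" using xeq leny l1 by simp
  have M0: "M \<ge> 0" using Jne Jb by (cases J) auto
  have sumy: "sum_list y \<le> M"
    using rebuild_sum_le[OF p1 sJ Jb s1 M0, of 0 0] sum_undecomp[of D] ED y_def
    by (simp add: sum_list_replicate)
  have sumx: "sum_list (unstep mu J x1) \<le> M + 2 * real (length J + N1) * mu"
    using xeq sum_list_map_add_const[of mu y] sumy leny l1 by simp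
  have posx: "\<forall>a\<in>set (unstep mu J x1). a > 0" using xeq ynn mu by auto
  have par: "even (length (undecomp D))" using leny l1 y_def by simp presburger
  have hwD: "hw_bal 0 True (undecomp D)"
    using hw_bal_undecomp[of 0 0 D True] Dnn par h1 x1 highest_weight_hw_bal by simp
  have hwy: "hw_bal 0 True y" using hwD y_def hw_bal_zeros[of 0 True "2*k"] by simp
  have hwx: "highest_weight (unstep mu J x1)"
    using hwy highest_weight_hw_bal highest_weight_add xeq by metis
  show ?thesis using step posx hwx lenx sumx by simp
qed

section \<open>The set of rigged data\<close>

definition rigging_bound :: "real \<Rightarrow> nat \<Rightarrow> (nat \<Rightarrow> real) \<Rightarrow> (nat \<Rightarrow> nat) \<Rightarrow> nat \<Rightarrow> real" where
  "rigging_bound L s mu nu i = L - 2 * (\<Sum>k<s. min (\<Sum>l\<le>i. mu l) (\<Sum>l\<le>k. mu l) * real (nu k))"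

definition rigged_cond :: "real \<Rightarrow> nat \<Rightarrow> (nat \<Rightarrow> real) \<Rightarrow> (nat \<Rightarrow> nat) \<Rightarrow> (nat \<Rightarrow> real list) \<Rightarrow> bool" where
  "rigged_cond L s mu nu J \<longleftrightarrow>
     (\<forall>i<s. mu i > 0 \<and> nu i \<ge> 1)
     \<and> (\<Sum>i<s. real (\<Sum>j\<in>{i..<s}. nu j) * mu i) \<le> L / 2
     \<and> (\<forall>i<s. length (J i) = nu i \<and> sorted (J i)
            \<and> (\<forall>v\<in>set (J i). 0 \<le> v \<and> v \<le> rigging_bound L s mu nu i))"

lemma rigging_bound_0:
  assumes "\<And>l. l < s \<Longrightarrow> 0 \<le> mu (Suc l)"
  shows "rigging_bound L (Suc s) mu nu 0 = L - 2 * real (\<Sum>j<Suc s. nu j) * mu 0"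
proof -
  have "min (mu 0) (\<Sum>l\<le>k. mu l) = mu 0" if "k < Suc s" for k
  proof (cases k)
    case (Suc k')
    have "0 \<le> (\<Sum>l\<le>k'. mu (Suc l))" using assms that Suc by (intro sum_nonneg) auto
    then show ?thesis using Suc by (simp only: sum.atMost_Suc_shift)
  qed simp
  then have "(\<Sum>k<Suc s. min (mu 0) (\<Sum>l\<le>k. mu l) * real (nu k)) = (\<Sum>k<Suc s. mu 0 * real (nu k))"
    by (intro sum.cong) auto
  also have "\<dots> = mu 0 * (\<Sum>k<Suc s. real (nu k))" by (rule sum_distrib_left[symmetric])
  finally show ?thesis unfolding rigging_bound_def by (simp add: mult.commute)
qed

lemma rigging_bound_Suc:
  assumes "\<And>l. l < s \<Longrightarrow> 0 \<le> mu (Suc l)" and "i < s"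
  shows "rigging_bound L (Suc s) mu nu (Suc i)
    = rigging_bound (L - 2 * real (\<Sum>j<Suc s. nu j) * mu 0) s (\<lambda>l. mu (Suc l)) (\<lambda>k. nu (Suc k)) i"
proof -
  define lam where "lam k = (\<Sum>l\<le>k. mu l)" for k
  define lam' where "lam' k = (\<Sum>l\<le>k. mu (Suc l))" for k
  have lam_Suc: "lam (Suc k) = mu 0 + lam' k" for k
    unfolding lam_def lam'_def by (rule sum.atMost_Suc_shift)
  have "0 \<le> lam' i" unfolding lam'_def using assms by (intro sum_nonneg) auto
  then have min0: "min (lam (Suc i)) (lam 0) = mu 0" using lam_Suc by (simp add: lam_def)
  have "(\<Sum>k<Suc s. min (lam (Suc i)) (lam k) * real (nu k))
      = min (lam (Suc i)) (lam 0) * real (nu 0)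
        + (\<Sum>k<s. min (mu 0 + lam' i) (mu 0 + lam' k) * real (nu (Suc k)))"
    by (simp only: sum.lessThan_Suc_shift lam_Suc)
  also have "(\<Sum>k<s. min (mu 0 + lam' i) (mu 0 + lam' k) * real (nu (Suc k)))
      = mu 0 * (\<Sum>k<s. real (nu (Suc k))) + (\<Sum>k<s. min (lam' i) (lam' k) * real (nu (Suc k)))"
    by (simp add: sum.distrib sum_distrib_left distrib_right flip: min_add_distrib_right)
  finally have "(\<Sum>k<Suc s. min (lam (Suc i)) (lam k) * real (nu k))
      = min (lam (Suc i)) (lam 0) * real (nu 0)
        + (mu 0 * (\<Sum>k<s. real (nu (Suc k))) + (\<Sum>k<s. min (lam' i) (lam' k) * real (nu (Suc k))))" .
  moreover have "real (\<Sum>j<Suc s. nu j) = real (nu 0) + (\<Sum>k<s. real (nu (Suc k)))"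
    unfolding of_nat_sum by (subst sum.lessThan_Suc_shift) simp
  ultimately have "(\<Sum>k<Suc s. min (lam (Suc i)) (lam k) * real (nu k))
      = mu 0 * real (\<Sum>j<Suc s. nu j) + (\<Sum>k<s. min (lam' i) (lam' k) * real (nu (Suc k)))"
    by (simp only: min0 distrib_left add.assoc mult.commute)
  then show ?thesis
    unfolding rigging_bound_def lam_def[symmetric] lam'_def[symmetric] by (simp add: algebra_simps)
qed

lemma sum_tail_sums_Suc:
  "(\<Sum>i<Suc s. real (\<Sum>j\<in>{i..<Suc s}. nu j) * mu i)
    = real (\<Sum>j<Suc s. nu j) * mu 0 + (\<Sum>i<s. real (\<Sum>j\<in>{i..<s}. nu (Suc j)) * mu (Suc i))"
  by (subst sum.lessThan_Suc_shift) (simp only: sum.shift_bounds_Suc_ivl atLeast0LessThan)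

lemma rigged_cond_Suc:
  "rigged_cond L (Suc s) mu nu J \<longleftrightarrow>
    (mu 0 > 0 \<and> nu 0 \<ge> 1 \<and> length (J 0) = nu 0 \<and> sorted (J 0)
     \<and> (\<forall>v\<in>set (J 0). 0 \<le> v \<and> v \<le> L - 2 * real (\<Sum>j<Suc s. nu j) * mu 0)
     \<and> rigged_cond (L - 2 * real (\<Sum>j<Suc s. nu j) * mu 0) s
         (\<lambda>i. mu (Suc i)) (\<lambda>i. nu (Suc i)) (\<lambda>i. J (Suc i)))"
  (is "?lhs \<longleftrightarrow> ?rhs")
proof -
  have "?lhs \<longleftrightarrow> ?rhs" if pos: "\<forall>i<Suc s. mu i > 0"
  proof -
    have nonneg: "\<And>l. l < s \<Longrightarrow> 0 \<le> mu (Suc l)" using pos by (auto intro: less_imp_le)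
    show ?thesis
      unfolding rigged_cond_def All_less_Suc2 sum_tail_sums_Suc
      by (auto simp: rigging_bound_0[of s mu, OF nonneg] rigging_bound_Suc[of s mu, OF nonneg]
          field_simps)
  qed
  moreover have "?lhs \<Longrightarrow> \<forall>i<Suc s. mu i > 0" "?rhs \<Longrightarrow> \<forall>i<Suc s. mu i > 0"
    unfolding rigged_cond_def All_less_Suc2 by auto
  ultimately show ?thesis by blast
qed

definition rigged :: "real \<Rightarrow> (real \<times> nat \<times> real list) list \<Rightarrow> bool" where
  "rigged L D = rigged_cond L (length D) (\<lambda>i. fst (D ! i)) (\<lambda>i. fst (snd (D ! i))) (\<lambda>i. snd (snd (D ! i)))"

definition total_nu :: "(real \<times> nat \<times> real list) list \<Rightarrow> nat" where
  "total_nu D = sum_list (map (\<lambda>d. fst (snd d)) D)"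

lemma total_nu_Cons: "total_nu ((m,n,J) # D') = n + total_nu D'"
  unfolding total_nu_def by simp

lemma Rset_iff_rigged: "D \<in> Rset L \<longleftrightarrow> D \<noteq> [] \<and> rigged L D"
  unfolding Rset_def rigged_def rigged_cond_def rigging_bound_def Let_def
  by (auto simp: Suc_le_eq all_set_conv_all_nth)

lemma rigged_Nil: "rigged L [] \<longleftrightarrow> L \<ge> 0"
  unfolding rigged_def rigged_cond_def by simp

lemma rigged_Cons: "rigged L ((m,n,J) # D') \<longleftrightarrow>
   m > 0 \<and> n \<ge> 1 \<and> length J = n \<and> sorted J
   \<and> (\<forall>v\<in>set J. 0 \<le> v \<and> v \<le> L - 2 * real (n + total_nu D') * m)
   \<and> rigged (L - 2 * real (n + total_nu D') * m) D'"
proof -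
  have "(\<Sum>j<Suc (length D'). fst (snd (((m,n,J) # D') ! j))) = n + total_nu D'"
    unfolding total_nu_def sum_list_sum_nth
    by (subst sum.lessThan_Suc_shift) (simp add: atLeast0LessThan)
  then show ?thesis
    unfolding rigged_def
    by (simp only: length_Cons rigged_cond_Suc nth_Cons_0 nth_Cons_Suc fst_conv snd_conv)
qed

section \<open>Iterating the step\<close>

lemma alg_enough_fuel: "config x N \<Longrightarrow> k \<ge> N \<Longrightarrow> alg k N x = alg N N x"
proof (induction N arbitrary: x k rule: less_induct)
  case (less N)
  obtain mu nu J x1 where st: "alg_step x = (mu, nu, J, x1)" by (cases "alg_step x") auto
  have step: "1 \<le> nu" "N - nu \<noteq> 0 \<longrightarrow> config x1 (N - nu)" using step_props[OF less.prems(1) st] by auto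
  have N1: "N \<ge> 1" using less.prems(1) config_def by auto
  obtain k0 where k0: "k = Suc k0" using less.prems(2) N1 by (cases k) auto
  obtain N0 where N0: "N = Suc N0" using N1 by (cases N) auto
  show ?case
  proof (cases "N - nu = 0")
    case True
    then show ?thesis unfolding k0 using N0 st by simp
  next
    case False
    have cfg1: "config x1 (N - nu)" using step False by blast
    have lt: "N - nu < N" using step(1) N1 by simp
    have "k0 \<ge> N - nu" using less.prems(2) k0 step(1) by simp
    then have "alg k0 (N - nu) x1 = alg (N - nu) (N - nu) x1" using less.IH[OF lt cfg1] by blast
    moreover have "N0 \<ge> N - nu" using N0 step(1) by simp
    then have "alg N0 (N - nu) x1 = alg (N - nu) (N - nu) x1" using less.IH[OF lt cfg1] by blast
    ultimately show ?thesis unfolding k0 using N0 st False by simp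
  qed
qed

lemma alg_rigged: "config x N \<Longrightarrow> sum_list x \<le> L \<Longrightarrow> rigged L (alg N N x) \<and> alg N N x \<noteq> [] \<and> total_nu (alg N N x) = N"
proof (induction N arbitrary: x L rule: less_induct)
  case (less N)
  obtain mu nu J x1 where st: "alg_step x = (mu, nu, J, x1)" by (cases "alg_step x") auto
  have step: "mu > 0" "nu = length J" "1 \<le> nu" "nu \<le> N" "sorted J"
    "\<forall>v\<in>set J. 0 \<le> v \<and> v \<le> sum_list x - 2 * real N * mu"
    "N - nu \<noteq> 0 \<longrightarrow> config x1 (N - nu)" "length x1 = 2*(N - nu)"
    "sum_list x1 \<le> sum_list x - 2 * real N * mu" "x = unstep mu J x1"
    using step_props[OF less.prems(1) st] by auto
  have N1: "N \<ge> 1" using less.prems(1) config_def by auto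
  obtain N0 where N0: "N = Suc N0" using N1 by (cases N) auto
  define T where "T = (if N - nu = 0 then [] else alg N0 (N - nu) x1)"
  have algx: "alg N N x = (mu, nu, J) # T" unfolding T_def using N0 st by simp
  have Tprop: "rigged (L - 2 * real N * mu) T \<and> total_nu T = N - nu"
  proof (cases "N - nu = 0")
    case True
    have "J \<noteq> []" using step by auto
    then obtain v where "v \<in> set J" by (cases J) auto
    then have "0 \<le> sum_list x - 2 * real N * mu" using step by force
    then have "L - 2 * real N * mu \<ge> 0" using less.prems(2) by simp
    then show ?thesis using True T_def rigged_Nil total_nu_def by simp
  next
    case False
    have cfg1: "config x1 (N - nu)" using step False by blast
    have lt: "N - nu < N" using step(3) N1 by simp
    have ge: "N0 \<ge> N - nu" using N0 step(3) by simp
    have TT: "T = alg (N - nu) (N - nu) x1" unfolding T_def using False alg_enough_fuel[OF cfg1 ge] by simp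
    have "sum_list x1 \<le> L - 2 * real N * mu" using step less.prems(2) by simp
    then show ?thesis using less.IH[OF lt cfg1] TT by simp
  qed
  have sn: "nu + total_nu T = N" using Tprop step by simp
  have "rigged L ((mu, nu, J) # T)"
    unfolding rigged_Cons sn using step Tprop less.prems(2) by force
  then show ?case using algx sn total_nu_Cons by simp
qed

lemma alg_inj: "config x N \<Longrightarrow> config x' N' \<Longrightarrow> alg N N x = alg N' N' x' \<Longrightarrow> x = x'"
proof (induction N arbitrary: x x' N' rule: less_induct)
  case (less N)
  have eqN: "N = N'" using alg_rigged[OF less.prems(1) order_refl] alg_rigged[OF less.prems(2) order_refl] less.prems(3) by metis
  obtain mu nu J x1 where st: "alg_step x = (mu, nu, J, x1)" by (cases "alg_step x") auto
  obtain mu' nu' J' x1' where st': "alg_step x' = (mu', nu', J', x1')" by (cases "alg_step x'") auto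
  have step: "mu > 0" "nu = length J" "1 \<le> nu" "nu \<le> N" "sorted J"
    "\<forall>v\<in>set J. 0 \<le> v \<and> v \<le> sum_list x - 2 * real N * mu"
    "N - nu \<noteq> 0 \<longrightarrow> config x1 (N - nu)" "length x1 = 2*(N - nu)"
    "sum_list x1 \<le> sum_list x - 2 * real N * mu" "x = unstep mu J x1"
    using step_props[OF less.prems(1) st] by auto
  have step': "mu' > 0" "nu' = length J'" "1 \<le> nu'" "nu' \<le> N" "sorted J'"
    "\<forall>v\<in>set J'. 0 \<le> v \<and> v \<le> sum_list x' - 2 * real N * mu'"
    "N - nu' \<noteq> 0 \<longrightarrow> config x1' (N - nu')" "length x1' = 2*(N - nu')"
    "sum_list x1' \<le> sum_list x' - 2 * real N * mu'" "x' = unstep mu' J' x1'"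
    using step_props[OF less.prems(2)[folded eqN] st'] by auto
  have N1: "N \<ge> 1" using less.prems(1) config_def by auto
  obtain N0 where N0: "N = Suc N0" using N1 by (cases N) auto
  have e: "(mu, nu, J) # (if N - nu = 0 then [] else alg N0 (N - nu) x1)
         = (mu', nu', J') # (if N - nu' = 0 then [] else alg N0 (N - nu') x1')"
  proof -
    have a1: "alg N N x = (mu, nu, J) # (if N - nu = 0 then [] else alg N0 (N - nu) x1)" using N0 st by simp
    have a2: "alg N N x' = (mu', nu', J') # (if N - nu' = 0 then [] else alg N0 (N - nu') x1')" using N0 st' by simp
    show ?thesis using a1 a2 less.prems(3) eqN by metis
  qed
  then have h: "mu = mu'" "nu = nu'" "J = J'" by auto
  show ?case
  proof (cases "N - nu = 0")
    case True
    then have "x1 = []" "x1' = []" using step step' h by auto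
    then show ?thesis using step step' h by simp
  next
    case False
    have cfg1: "config x1 (N - nu)" and cfg1': "config x1' (N - nu)" using step(7) step'(7) h False by auto
    have lt: "N - nu < N" using step(3) N1 by simp
    have "alg N0 (N - nu) x1 = alg N0 (N - nu) x1'" using e h False by simp
    moreover have "N0 \<ge> N - nu" using N0 step(3) by simp
    ultimately have "alg (N - nu) (N - nu) x1 = alg (N - nu) (N - nu) x1'"
      using alg_enough_fuel[OF cfg1] alg_enough_fuel[OF cfg1'] by metis
    then have "x1 = x1'" using less.IH[OF lt cfg1 cfg1'] by simp
    then show ?thesis using step step' h by simp
  qed
qed

lemma alg_surj: "rigged L D \<Longrightarrow> D \<noteq> [] \<Longrightarrow> \<exists>x N. config x N \<and> sum_list x \<le> L \<and> alg N N x = D"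
proof (induction D arbitrary: L)
  case Nil then show ?case by simp
next
  case (Cons d D')
  obtain m n J where d: "d = (m, n, J)" by (cases d) auto
  define L' where "L' = L - 2 * real (n + total_nu D') * m"
  have R: "m > 0" "n \<ge> 1" "length J = n" "sorted J" "\<forall>v\<in>set J. 0 \<le> v \<and> v \<le> L'" "rigged L' D'"
    using Cons.prems(1) unfolding d rigged_Cons L'_def by auto
  have Jne: "J \<noteq> []" using R by auto
  obtain x1 N1 where x1: "x1 = [] \<and> N1 = 0 \<and> D' = [] \<or> (config x1 N1 \<and> sum_list x1 \<le> L' \<and> alg N1 N1 x1 = D')"
    using Cons.IH[OF R(6)] by blast
  have x1props: "\<forall>a\<in>set x1. a > 0" "highest_weight x1" "length x1 = 2*N1" "sum_list x1 \<le> L'"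
  proof -
    show "\<forall>a\<in>set x1. a > 0" "highest_weight x1" "length x1 = 2*N1"
      using x1 unfolding config_def highest_weight_def by auto
    show "sum_list x1 \<le> L'"
    proof (cases "D' = []")
      case True
      then have "L' \<ge> 0" using R(6) rigged_Nil by simp
      then show ?thesis using x1 True config_def alg_rigged by auto
    next
      case False then show ?thesis using x1 by auto
    qed
  qed
  have sn: "total_nu D' = N1"
    using x1 alg_rigged[of x1 N1 L'] total_nu_def by auto
  define x where "x = unstep m J x1"
  note B = step_unstep[OF R(1) Jne R(4) R(5) x1props(1,2,3,4)]
  have vx: "config x (n + N1)" using B R unfolding x_def config_def by simp
  have sx: "sum_list x \<le> L" using B R unfolding x_def L'_def sn by simp
  have ax: "alg (n + N1) (n + N1) x = d # D'"
  proof (cases "N1 = 0")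
    case True
    then have "D' = []" using x1 config_def by auto
    then show ?thesis using B R True d unfolding x_def by (cases n) auto
  next
    case False
    then have cfg1: "config x1 N1" and a1: "alg N1 N1 x1 = D'" using x1 by auto
    obtain n0 where n0: "n = Suc n0" using R(2) by (cases n) auto
    have "alg (n0 + N1) N1 x1 = D'" using alg_enough_fuel[OF cfg1, of "n0 + N1"] a1 by simp
    then show ?thesis using B R False d n0 unfolding x_def by simp
  qed
  show ?case using vx sx ax by blast
qed

lemma Pplus_iff: "x \<in> Pplus L \<longleftrightarrow> config x (length x div 2) \<and> sum_list x \<le> L"
  unfolding Pplus_def config_def by auto

theorem mainTheorem11:
  fixes L :: real
  assumes "L > 0"
  shows "(\<forall>x\<in>Pplus L. phi x \<in> Rset L) \<and> bij_betw phi (Pplus L) (Rset L)"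
proof -
  have into: "\<forall>x\<in>Pplus L. phi x \<in> Rset L"
  proof
    fix x assume "x \<in> Pplus L"
    then show "phi x \<in> Rset L" using alg_rigged unfolding Pplus_iff phi_def Rset_iff_rigged by blast
  qed
  moreover have "inj_on phi (Pplus L)"
    by (rule inj_onI) (use alg_inj in \<open>auto simp: Pplus_iff phi_def\<close>)
  moreover have "Rset L \<subseteq> phi ` Pplus L"
  proof
    fix D assume "D \<in> Rset L"
    then obtain x N where x: "config x N" "sum_list x \<le> L" "alg N N x = D"
      using alg_surj Rset_iff_rigged by blast
    then have "length x div 2 = N" by (simp add: config_def)
    with x show "D \<in> phi ` Pplus L" by (auto simp: Pplus_iff phi_def)
  qed
  ultimately show ?thesis unfolding bij_betw_def by blast
qed

end
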